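(* Let $\mathbf{C}$ be a category all of whose morphisms are monomorphisms, enriched over $\mathbf{Top}$ with every homset Hausdorff. Let $\mathbf{D}$ be a full subcategory of $\mathbf{C}$ such that $\hom(A,B)$ is finite for all $A, B \in \mathrm{Ob}(\mathbf{D})$. Let $(X_n, x_n^m)_{n \le m \in \omega}$ be a sequence in $\mathbf{D}$ with a colimit $(S, \sigma_n)_{n \in \omega}$ in $\mathbf{C}$ which is $\omega$-small and such that $S$ is universal for $\mathbf{D}$. Then for every $A \in \mathrm{Ob}(\mathbf{D})$ and every $t \in \mathbb{N}$ the following are equivalent: (1) $t_\mathbf{D}(A) \le t$; (2) $S \longrightarrow_\flat (B)^A_{k,t}$ for all $k \in \mathbb{N}$ and all $B \in \mathrm{Ob}(\mathbf{D})$ with $\hom(A,B) \ne \varnothing$. Consequently, $t_\mathbf{D}(A) \le T_\mathbf{C}(A,S)$ for every $A \in \mathrm{Ob}(\mathbf{D})$.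
   Context: A category is enriched over $\mathbf{Top}$ if each homset is a topological space and composition is continuous. A sequence in $\mathbf{D}$ is a functor $\omega \to \mathbf{D}$, written $(X_n, x_n^m)_{n\le m\in\omega}$ with $x_n^m \in \hom_\mathbf{D}(X_n, X_m)$; its colimit $(S,\sigma_n)_{n\in\omega}$ in $\mathbf{C}$ has canonical morphisms $\sigma_n : X_n \to S$. The colimit is $\omega$-small if for every $A \in \mathrm{Ob}(\mathbf{D})$ and every $f \in \hom_\mathbf{C}(A,S)$ there exist $n \in \omega$ and $g \in \hom_\mathbf{D}(A, X_n)$ with $f = \sigma_n \cdot g$. $S$ is universal for $\mathbf{D}$ if $\hom_\mathbf{C}(D,S) \ne \varnothing$ for every $D \in \mathrm{Ob}(\mathbf{D})$. $t_\mathbf{D}(A)$ (small embedding Ramsey degree) is the least positive integer $n$ such that for all $k \in \mathbb{N}$ and $B \in \mathrm{Ob}(\mathbf{D})$ there is $C \in \mathrm{Ob}(\mathbf{D})$ such that every coloring $\chi : \hom(A,C) \to \{0,\dots,k-1\}$ admits $w \in \hom(B,C)$ with $|\chi(w \cdot \hom(A,B))| \le n$; $\infty$ if none. A Borel $k$-coloring is a map to $\{0,\dots,k-1\}$ with Borel fibers. $S \longrightarrow_\flat (B)^A_{k,t}$ means: for every Borel $k$-coloring $\chi$ of $\hom_\mathbf{C}(A,S)$ there is $w \in \hom(B,S)$ with $|\chi(w \cdot \hom(A,B))| \le t$. $T_\mathbf{C}(A,S)$ is the least positive integer $n$ with $S \longrightarrow_\flat (S)^A_{k,n}$ for all $k \ge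 2$, $\infty$ if none. *)

theory Defs
  imports "HOL-Analysis.Analysis"
begin

text \<open>A category given by an object set, homsets, composition (cmp g f = g after f)
  and identities.\<close>
definition category :: "'o set \<Rightarrow> ('o \<Rightarrow> 'o \<Rightarrow> 'm set) \<Rightarrow> ('m \<Rightarrow> 'm \<Rightarrow> 'm) \<Rightarrow> ('o \<Rightarrow> 'm) \<Rightarrow> bool" where
"category Ob hom cmp ide \<longleftrightarrow>
  (\<forall>A B. hom A B \<noteq> {} \<longrightarrow> A \<in> Ob \<and> B \<in> Ob) \<and>
  (\<forall>A\<in>Ob. \<forall>B\<in>Ob. \<forall>C\<in>Ob. \<forall>f\<in>hom A B. \<forall>g\<in>hom B C. cmp g f \<in> hom A C) \<and>
  (\<forall>A\<in>Ob. \<forall>B\<in>Ob. \<forall>C\<in>Ob. \<forall>E\<in>Ob. \<forall>f\<in>hom A B. \<forall>g\<in>hom B C. \<forall>h\<in>hom C E.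
      cmp h (cmp g f) = cmp (cmp h g) f) \<and>
  (\<forall>A\<in>Ob. ide A \<in> hom A A) \<and>
  (\<forall>A\<in>Ob. \<forall>B\<in>Ob. \<forall>f\<in>hom A B. cmp f (ide A) = f \<and> cmp (ide B) f = f) \<and>
  (\<forall>A B A' B' f. f \<in> hom A B \<and> f \<in> hom A' B' \<longrightarrow> A = A' \<and> B = B')"

definition all_mono :: "'o set \<Rightarrow> ('o \<Rightarrow> 'o \<Rightarrow> 'm set) \<Rightarrow> ('m \<Rightarrow> 'm \<Rightarrow> 'm) \<Rightarrow> bool" where
"all_mono Ob hom cmp \<longleftrightarrow>
  (\<forall>A\<in>Ob. \<forall>B\<in>Ob. \<forall>Z\<in>Ob. \<forall>f\<in>hom A B. \<forall>g\<in>hom Z A. \<forall>h\<in>hom Z A.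
     cmp f g = cmp f h \<longrightarrow> g = h)"

definition top_enriched :: "'o set \<Rightarrow> ('o \<Rightarrow> 'o \<Rightarrow> 'm set) \<Rightarrow> ('m \<Rightarrow> 'm \<Rightarrow> 'm) \<Rightarrow> ('o \<Rightarrow> 'o \<Rightarrow> 'm topology) \<Rightarrow> bool" where
"top_enriched Ob hom cmp T \<longleftrightarrow>
  (\<forall>A\<in>Ob. \<forall>B\<in>Ob. topspace (T A B) = hom A B) \<and>
  (\<forall>A\<in>Ob. \<forall>B\<in>Ob. \<forall>C\<in>Ob.
     continuous_map (prod_topology (T A B) (T B C)) (T A C) (\<lambda>(f, g). cmp g f))"

definition is_sequence :: "'o set \<Rightarrow> ('o \<Rightarrow> 'o \<Rightarrow> 'm set) \<Rightarrow> ('m \<Rightarrow> 'm \<Rightarrow> 'm) \<Rightarrow> ('o \<Rightarrow> 'm)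
    \<Rightarrow> (nat \<Rightarrow> 'o) \<Rightarrow> (nat \<Rightarrow> nat \<Rightarrow> 'm) \<Rightarrow> bool" where
"is_sequence ObD hom cmp ide X x \<longleftrightarrow>
  (\<forall>n. X n \<in> ObD) \<and>
  (\<forall>n m. n \<le> m \<longrightarrow> x n m \<in> hom (X n) (X m)) \<and>
  (\<forall>n. x n n = ide (X n)) \<and>
  (\<forall>n m l. n \<le> m \<longrightarrow> m \<le> l \<longrightarrow> cmp (x m l) (x n m) = x n l)"

definition is_colimit :: "'o set \<Rightarrow> ('o \<Rightarrow> 'o \<Rightarrow> 'm set) \<Rightarrow> ('m \<Rightarrow> 'm \<Rightarrow> 'm)
    \<Rightarrow> (nat \<Rightarrow> 'o) \<Rightarrow> (nat \<Rightarrow> nat \<Rightarrow> 'm) \<Rightarrow> 'o \<Rightarrow> (nat \<Rightarrow> 'm) \<Rightarrow> bool" where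
"is_colimit Ob hom cmp X x S \<sigma> \<longleftrightarrow>
  S \<in> Ob \<and>
  (\<forall>n. \<sigma> n \<in> hom (X n) S) \<and>
  (\<forall>n m. n \<le> m \<longrightarrow> cmp (\<sigma> m) (x n m) = \<sigma> n) \<and>
  (\<forall>Y\<in>Ob. \<forall>\<tau>. (\<forall>n. \<tau> n \<in> hom (X n) Y) \<and> (\<forall>n m. n \<le> m \<longrightarrow> cmp (\<tau> m) (x n m) = \<tau> n)
     \<longrightarrow> (\<exists>!u. u \<in> hom S Y \<and> (\<forall>n. cmp u (\<sigma> n) = \<tau> n)))"

definition omega_small :: "'o set \<Rightarrow> ('o \<Rightarrow> 'o \<Rightarrow> 'm set) \<Rightarrow> ('m \<Rightarrow> 'm \<Rightarrow> 'm)
    \<Rightarrow> (nat \<Rightarrow> 'o) \<Rightarrow> 'o \<Rightarrow> (nat \<Rightarrow> 'm) \<Rightarrow> bool" where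
"omega_small ObD hom cmp X S \<sigma> \<longleftrightarrow>
  (\<forall>A\<in>ObD. \<forall>f\<in>hom A S. \<exists>n. \<exists>g\<in>hom A (X n). f = cmp (\<sigma> n) g)"

definition universal_for :: "'o set \<Rightarrow> ('o \<Rightarrow> 'o \<Rightarrow> 'm set) \<Rightarrow> 'o \<Rightarrow> bool" where
"universal_for ObD hom S \<longleftrightarrow> (\<forall>D\<in>ObD. hom D S \<noteq> {})"

definition small_ramsey_prop :: "'o set \<Rightarrow> ('o \<Rightarrow> 'o \<Rightarrow> 'm set) \<Rightarrow> ('m \<Rightarrow> 'm \<Rightarrow> 'm) \<Rightarrow> 'o \<Rightarrow> nat \<Rightarrow> bool" where
"small_ramsey_prop ObD hom cmp A n \<longleftrightarrow>
  (\<forall>k::nat. \<forall>B\<in>ObD. \<exists>C\<in>ObD. \<forall>col::'m \<Rightarrow> nat. col ` hom A C \<subseteq> {..<k} \<longrightarrow>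
     (\<exists>w\<in>hom B C. card (col ` (\<lambda>f. cmp w f) ` hom A B) \<le> n))"

definition small_ramsey_degree :: "'o set \<Rightarrow> ('o \<Rightarrow> 'o \<Rightarrow> 'm set) \<Rightarrow> ('m \<Rightarrow> 'm \<Rightarrow> 'm) \<Rightarrow> 'o \<Rightarrow> enat" where
"small_ramsey_degree ObD hom cmp A =
  (if \<exists>n>0. small_ramsey_prop ObD hom cmp A n
   then enat (LEAST n. n > 0 \<and> small_ramsey_prop ObD hom cmp A n) else \<infinity>)"

definition borel_coloring :: "'m topology \<Rightarrow> nat \<Rightarrow> ('m \<Rightarrow> nat) \<Rightarrow> bool" where
"borel_coloring T k col \<longleftrightarrow>
  col ` topspace T \<subseteq> {..<k} \<and>
  (\<forall>i<k. {f \<in> topspace T. col f = i} \<in> sigma_sets (topspace T) {U. openin T U})"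

definition borel_arrow :: "('o \<Rightarrow> 'o \<Rightarrow> 'm set) \<Rightarrow> ('m \<Rightarrow> 'm \<Rightarrow> 'm) \<Rightarrow> ('o \<Rightarrow> 'o \<Rightarrow> 'm topology)
    \<Rightarrow> 'o \<Rightarrow> 'o \<Rightarrow> 'o \<Rightarrow> nat \<Rightarrow> nat \<Rightarrow> bool" where
"borel_arrow hom cmp T S B A k t \<longleftrightarrow>
  (\<forall>col. borel_coloring (T A S) k col \<longrightarrow>
     (\<exists>w\<in>hom B S. card (col ` (\<lambda>f. cmp w f) ` hom A B) \<le> t))"

definition big_ramsey_degree :: "('o \<Rightarrow> 'o \<Rightarrow> 'm set) \<Rightarrow> ('m \<Rightarrow> 'm \<Rightarrow> 'm) \<Rightarrow> ('o \<Rightarrow> 'o \<Rightarrow> 'm topology)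
    \<Rightarrow> 'o \<Rightarrow> 'o \<Rightarrow> enat" where
"big_ramsey_degree hom cmp T A S =
  (if \<exists>n>0. \<forall>k\<ge>2. borel_arrow hom cmp T S S A k n
   then enat (LEAST n. n > 0 \<and> (\<forall>k\<ge>2. borel_arrow hom cmp T S S A k n)) else \<infinity>)"

end

theory Submission
  imports Defs
begin

text \<open>The homsets from objects of D into S are countable, because every arrow factors through one
  of the finite homsets into some X n; being Hausdorff, they are therefore discrete as measurable
  spaces, so every colouring is Borel. Hence a finite Ramsey statement for D transfers up to S
  through an embedding of the witness C into S, and conversely a failure of the finite statement
  at every stage X n gives finitely many bad colourings at each stage, compatible under pullback
  along the connecting maps; by Koenig's lemma a coherent thread of bad colourings exists, which
  (all arrows being monic) glues to a colouring of hom(A, S) contradicting the arrow relation.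
  The bound by T_C(A, S) follows by precomposing with an embedding of B into S.\<close>

lemma sigma_sets_countable_t1_space:
  assumes "t1_space X" and "countable (topspace X)" and "Y \<subseteq> topspace X"
  shows "Y \<in> sigma_sets (topspace X) {U. openin X U}"
proof -
  have singleton: "{y} \<in> sigma_sets (topspace X) {U. openin X U}" if "y \<in> topspace X" for y
  proof -
    have "openin X (topspace X - {y})"
      using closedin_t1_singleton[OF \<open>t1_space X\<close> that] by (simp add: closedin_def)
    then have "topspace X - (topspace X - {y}) \<in> sigma_sets (topspace X) {U. openin X U}"
      by (intro sigma_sets.Compl sigma_sets.Basic) simp
    with that show ?thesis
      by (simp add: Diff_Diff_Int)
  qed
  have "countable ((\<lambda>y. {y}) ` Y)"
    using assms(2,3) countable_subset by blast
  then have "\<Union> ((\<lambda>y. {y}) ` Y) \<in> sigma_sets (topspace X) {U. openin X U}"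
    using singleton assms(3) by (intro sigma_sets_UNION) auto
  then show ?thesis
    by simp
qed

lemma finite_decseq_stabilizes:
  fixes E :: "nat \<Rightarrow> 'a set"
  assumes "decseq E" and "finite (E 0)"
  obtains M where "\<And>m. M \<le> m \<Longrightarrow> E m = E M"
proof -
  obtain M where M: "\<And>m. card (E M) \<le> card (E m)"
    using ex_has_least_nat[of "\<lambda>_. True" 0 "\<lambda>m. card (E m)"] by blast
  have "E m = E M" if "M \<le> m" for m
  proof -
    have "E m \<subseteq> E M" and "finite (E M)"
      using \<open>decseq E\<close> \<open>finite (E 0)\<close> that by (auto simp: decseq_def intro: finite_subset)
    then show ?thesis
      using M[of m] by (meson card_mono card_subset_eq le_antisym)
  qed
  then show thesis
    using that by blast
qed

lemma inverse_limit_finite_nonempty: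
  fixes P :: "nat \<Rightarrow> 'a set" and R :: "nat \<Rightarrow> nat \<Rightarrow> 'a \<Rightarrow> 'a"
  assumes finite_P: "\<And>n. finite (P n)" and nonempty_P: "\<And>n. P n \<noteq> {}"
    and maps: "\<And>n m c. n \<le> m \<Longrightarrow> c \<in> P m \<Longrightarrow> R n m c \<in> P n"
    and compose: "\<And>n m l c. n \<le> m \<Longrightarrow> m \<le> l \<Longrightarrow> c \<in> P l \<Longrightarrow> R n m (R m l c) = R n l c"
    and identity: "\<And>n c. c \<in> P n \<Longrightarrow> R n n c = c"
  shows "\<exists>F. (\<forall>n. F n \<in> P n) \<and> (\<forall>n m. n \<le> m \<longrightarrow> R n m (F m) = F n)"
proof -
  define D where "D n j = R n (n + j) ` P (n + j)" for n j
  define G where "G n = (\<Inter>j. D n j)" for n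
  have D_decseq: "decseq (D n)" for n
  proof (rule decseq_SucI)
    fix j
    have "R n (n + Suc j) c = R n (n + j) (R (n + j) (n + Suc j) c)" if "c \<in> P (n + Suc j)" for c
      using compose[of n "n + j" "n + Suc j" c] that by simp
    then have "D n (Suc j) = R n (n + j) ` R (n + j) (n + Suc j) ` P (n + Suc j)"
      unfolding D_def image_image by (rule image_cong[OF refl])
    also have "\<dots> \<subseteq> D n j"
      unfolding D_def using maps[of "n + j" "n + Suc j"] by (intro image_mono) auto
    finally show "D n (Suc j) \<subseteq> D n j" .
  qed
  have G_stable: "\<exists>M. G n = D n M \<and> (\<forall>j\<ge>M. D n j = D n M)" for n
  proof -
    have "finite (D n 0)"
      unfolding D_def using finite_P by blast
    then obtain M where M: "\<And>j. M \<le> j \<Longrightarrow> D n j = D n M"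
      using finite_decseq_stabilizes[OF D_decseq] by blast
    have "D n M \<subseteq> D n j" for j
    proof (cases "j \<le> M")
      case True
      then show ?thesis
        using D_decseq[of n] by (simp add: decseq_def)
    next
      case False
      then show ?thesis
        using M[of j] by simp
    qed
    then have "G n = D n M"
      unfolding G_def by blast
    with M show ?thesis
      by blast
  qed
  have G_nonempty: "G n \<noteq> {}" for n
  proof -
    obtain M where "G n = D n M"
      using G_stable by blast
    then show ?thesis
      using nonempty_P[of "n + M"] unfolding D_def by simp
  qed
  have G_subset: "G n \<subseteq> P n" for n
  proof -
    have "D n 0 = P n"
      unfolding D_def using identity by simp
    then show ?thesis
      unfolding G_def by blast
  qed
  have G_extend: "\<exists>c'. c' \<in> G (Suc n) \<and> R n (Suc n) c' = c" if "c \<in> G n" for n c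
  proof -
    obtain M where M: "G (Suc n) = D (Suc n) M"
      using G_stable by blast
    have "c \<in> D n (Suc M)"
      using that unfolding G_def by blast
    then obtain d where d: "d \<in> P (Suc n + M)" and c: "c = R n (Suc n + M) d"
      unfolding D_def by auto
    have "R (Suc n) (Suc n + M) d \<in> G (Suc n)"
      using M d unfolding D_def by blast
    moreover have "R n (Suc n) (R (Suc n) (Suc n + M) d) = c"
      using compose[of n "Suc n" "Suc n + M" d] d c by simp
    ultimately show ?thesis
      by blast
  qed
  obtain F where F: "\<And>n. F n \<in> G n \<and> R n (Suc n) (F (Suc n)) = F n"
    using dependent_nat_choice[of "\<lambda>n c. c \<in> G n" "\<lambda>n c c'. R n (Suc n) c' = c"]
      G_nonempty G_extend by blast
  have F_in: "F n \<in> P n" for n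
    using F G_subset by blast
  have "R n m (F m) = F n" if "n \<le> m" for n m
    using that
  proof (induction m rule: dec_induct)
    case base
    then show ?case
      using identity F_in by simp
  next
    case (step m)
    then show ?case
      using compose[of n m "Suc m" "F (Suc m)"] F F_in by simp
  qed
  with F_in show ?thesis
    by blast
qed

lemma small_ramsey_prop_mono:
  "small_ramsey_prop ObD hom cmp A n \<Longrightarrow> n \<le> n' \<Longrightarrow> small_ramsey_prop ObD hom cmp A n'"
  unfolding small_ramsey_prop_def by (meson order_trans)

lemma small_ramsey_degree_le_enat_iff:
  "small_ramsey_degree ObD hom cmp A \<le> enat t \<longleftrightarrow> 0 < t \<and> small_ramsey_prop ObD hom cmp A t"
proof
  assume le: "small_ramsey_degree ObD hom cmp A \<le> enat t"
  then have ex: "\<exists>n>0. small_ramsey_prop ObD hom cmp A n"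
    unfolding small_ramsey_degree_def by (auto split: if_splits)
  define L where "L = (LEAST n. n > 0 \<and> small_ramsey_prop ObD hom cmp A n)"
  have "L > 0 \<and> small_ramsey_prop ObD hom cmp A L"
    unfolding L_def using ex by (rule LeastI_ex)
  moreover have "L \<le> t"
    using le ex unfolding small_ramsey_degree_def L_def by simp
  ultimately show "0 < t \<and> small_ramsey_prop ObD hom cmp A t"
    using small_ramsey_prop_mono by auto
next
  assume "0 < t \<and> small_ramsey_prop ObD hom cmp A t"
  then show "small_ramsey_degree ObD hom cmp A \<le> enat t"
    unfolding small_ramsey_degree_def by (auto intro: Least_le)
qed

lemma big_ramsey_degree_enatD:
  assumes "big_ramsey_degree hom cmp T A S = enat N"
  shows "0 < N" and "\<And>k. 2 \<le> k \<Longrightarrow> borel_arrow hom cmp T S S A k N"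
proof -
  have ex: "\<exists>n>0. \<forall>k\<ge>2. borel_arrow hom cmp T S S A k n"
    using assms unfolding big_ramsey_degree_def by (auto split: if_splits)
  then have "N = (LEAST n. n > 0 \<and> (\<forall>k\<ge>2. borel_arrow hom cmp T S S A k n))"
    using assms unfolding big_ramsey_degree_def by simp
  with LeastI_ex[OF ex] show "0 < N" and "\<And>k. 2 \<le> k \<Longrightarrow> borel_arrow hom cmp T S S A k N"
    by simp_all
qed

locale hom_category =
  fixes Ob :: "'o set" and hom :: "'o \<Rightarrow> 'o \<Rightarrow> 'm set" and cmp :: "'m \<Rightarrow> 'm \<Rightarrow> 'm"
    and ide :: "'o \<Rightarrow> 'm"
  assumes category: "category Ob hom cmp ide"
begin

lemma hom_objects: "f \<in> hom A B \<Longrightarrow> A \<in> Ob \<and> B \<in> Ob"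
  using category unfolding category_def by (metis empty_iff)

lemma comp_in_hom:
  assumes "f \<in> hom A B" and "g \<in> hom B C"
  shows "cmp g f \<in> hom A C"
proof -
  have "\<forall>A\<in>Ob. \<forall>B\<in>Ob. \<forall>C\<in>Ob. \<forall>f\<in>hom A B. \<forall>g\<in>hom B C. cmp g f \<in> hom A C"
    using category unfolding category_def by simp
  with assms hom_objects show ?thesis
    by blast
qed

lemma comp_assoc:
  assumes "f \<in> hom A B" and "g \<in> hom B C" and "h \<in> hom C E"
  shows "cmp h (cmp g f) = cmp (cmp h g) f"
proof -
  have "\<forall>A\<in>Ob. \<forall>B\<in>Ob. \<forall>C\<in>Ob. \<forall>E\<in>Ob. \<forall>f\<in>hom A B. \<forall>g\<in>hom B C. \<forall>h\<in>hom C E.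
      cmp h (cmp g f) = cmp (cmp h g) f"
    using category unfolding category_def by simp
  with assms hom_objects show ?thesis
    by blast
qed

lemma ide_in_hom: "A \<in> Ob \<Longrightarrow> ide A \<in> hom A A"
  using category unfolding category_def by blast

lemma ide_comp:
  assumes "f \<in> hom A B"
  shows "cmp (ide B) f = f"
proof -
  have "\<forall>A\<in>Ob. \<forall>B\<in>Ob. \<forall>f\<in>hom A B. cmp f (ide A) = f \<and> cmp (ide B) f = f"
    using category unfolding category_def by simp
  with assms hom_objects show ?thesis
    by blast
qed

lemma image_comp_comp:
  "f \<in> hom B C \<Longrightarrow> g \<in> hom C E \<Longrightarrow> cmp g ` cmp f ` hom A B = cmp (cmp g f) ` hom A B"
  unfolding image_image using comp_assoc by (intro image_cong) auto

end

locale omega_colimit = hom_category Ob hom cmp ide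
  for Ob :: "'o set" and hom :: "'o \<Rightarrow> 'o \<Rightarrow> 'm set" and cmp :: "'m \<Rightarrow> 'm \<Rightarrow> 'm"
    and ide :: "'o \<Rightarrow> 'm" +
  fixes ObD :: "'o set" and T :: "'o \<Rightarrow> 'o \<Rightarrow> 'm topology"
    and X :: "nat \<Rightarrow> 'o" and x :: "nat \<Rightarrow> nat \<Rightarrow> 'm" and S :: 'o and \<sigma> :: "nat \<Rightarrow> 'm"
  assumes mono: "all_mono Ob hom cmp"
    and enr: "top_enriched Ob hom cmp T"
    and haus: "\<forall>A\<in>Ob. \<forall>B\<in>Ob. Hausdorff_space (T A B)"
    and sub: "ObD \<subseteq> Ob"
    and fin: "\<forall>A\<in>ObD. \<forall>B\<in>ObD. finite (hom A B)"
    and seq: "is_sequence ObD hom cmp ide X x"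
    and colim: "is_colimit Ob hom cmp X x S \<sigma>"
    and small: "omega_small ObD hom cmp X S \<sigma>"
    and univ: "universal_for ObD hom S"
begin

lemma mono_cancel: "f \<in> hom A B \<Longrightarrow> g \<in> hom Z A \<Longrightarrow> h \<in> hom Z A \<Longrightarrow> cmp f g = cmp f h \<Longrightarrow> g = h"
  using mono hom_objects unfolding all_mono_def by meson

lemma X_in_ObD: "X n \<in> ObD"
  using seq unfolding is_sequence_def by blast

lemma x_in_hom: "n \<le> m \<Longrightarrow> x n m \<in> hom (X n) (X m)"
  using seq unfolding is_sequence_def by blast

lemma x_refl: "x n n = ide (X n)"
  using seq unfolding is_sequence_def by blast

lemma x_trans: "n \<le> m \<Longrightarrow> m \<le> l \<Longrightarrow> cmp (x m l) (x n m) = x n l"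
  using seq unfolding is_sequence_def by blast

lemma S_in_Ob: "S \<in> Ob"
  using colim unfolding is_colimit_def by blast

lemma \<sigma>_in_hom: "\<sigma> n \<in> hom (X n) S"
  using colim unfolding is_colimit_def by blast

lemma \<sigma>_x: "n \<le> m \<Longrightarrow> cmp (\<sigma> m) (x n m) = \<sigma> n"
  using colim unfolding is_colimit_def by blast

lemma factors_through_\<sigma>:
  "A \<in> ObD \<Longrightarrow> f \<in> hom A S \<Longrightarrow> \<exists>n. \<exists>g\<in>hom A (X n). f = cmp (\<sigma> n) g"
  using small unfolding omega_small_def by blast

lemma hom_to_S_nonempty: "B \<in> ObD \<Longrightarrow> hom B S \<noteq> {}"
  using univ unfolding universal_for_def by blast

lemma topspace_T: "A \<in> Ob \<Longrightarrow> B \<in> Ob \<Longrightarrow> topspace (T A B) = hom A B"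
  using enr unfolding top_enriched_def by blast

lemma countable_hom_into_S:
  assumes "A \<in> ObD"
  shows "countable (hom A S)"
proof -
  have "hom A S \<subseteq> (\<Union>n. cmp (\<sigma> n) ` hom A (X n))"
    using factors_through_\<sigma>[OF assms] by blast
  moreover have "countable (\<Union>n. cmp (\<sigma> n) ` hom A (X n))"
    using fin assms X_in_ObD by (intro countable_UN) (auto intro: countable_finite)
  ultimately show ?thesis
    using countable_subset by blast
qed

lemma borel_coloring_iff:
  assumes "A \<in> ObD"
  shows "borel_coloring (T A S) k col \<longleftrightarrow> col ` hom A S \<subseteq> {..<k}"
proof -
  have AS: "A \<in> Ob" "S \<in> Ob"
    using assms sub S_in_Ob by auto
  then have "t1_space (T A S)"
    using haus Hausdorff_imp_t1_space by blast
  then have "Y \<in> sigma_sets (hom A S) {U. openin (T A S) U}" if "Y \<subseteq> hom A S" for Y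
    using sigma_sets_countable_t1_space[of "T A S" Y] countable_hom_into_S[OF assms] that
    by (simp add: topspace_T[OF AS])
  then show ?thesis
    unfolding borel_coloring_def topspace_T[OF AS] by auto
qed

lemma \<sigma>_comp_eqD:
  assumes "n \<le> m" and g: "g \<in> hom A (X n)" and g': "g' \<in> hom A (X m)"
    and eq: "cmp (\<sigma> n) g = cmp (\<sigma> m) g'"
  shows "cmp (x n m) g = g'"
proof -
  have "cmp (\<sigma> m) (cmp (x n m) g) = cmp (\<sigma> m) g'"
    using comp_assoc[OF g x_in_hom \<sigma>_in_hom] \<sigma>_x eq \<open>n \<le> m\<close> by simp
  then show ?thesis
    using mono_cancel[OF \<sigma>_in_hom comp_in_hom[OF g x_in_hom] g'] \<open>n \<le> m\<close> by simp
qed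

lemma glue_coherent_colorings:
  assumes coherent: "\<And>n m g. n \<le> m \<Longrightarrow> g \<in> hom A (X n) \<Longrightarrow> F m (cmp (x n m) g) = F n g"
  obtains col where "\<And>n g. g \<in> hom A (X n) \<Longrightarrow> col (cmp (\<sigma> n) g) = F n g"
proof -
  have well_defined: "F n g = F m g'"
    if "g \<in> hom A (X n)" "g' \<in> hom A (X m)" "cmp (\<sigma> n) g = cmp (\<sigma> m) g'" for n m g g'
    using that coherent \<sigma>_comp_eqD by (cases "n \<le> m") (metis nle_le)+
  define pick where "pick f = (SOME p. snd p \<in> hom A (X (fst p)) \<and> f = cmp (\<sigma> (fst p)) (snd p))"
    for f
  have "F (fst (pick (cmp (\<sigma> n) g))) (snd (pick (cmp (\<sigma> n) g))) = F n g"
    if g: "g \<in> hom A (X n)" for n g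
  proof -
    have "snd (pick (cmp (\<sigma> n) g)) \<in> hom A (X (fst (pick (cmp (\<sigma> n) g))))
        \<and> cmp (\<sigma> n) g = cmp (\<sigma> (fst (pick (cmp (\<sigma> n) g)))) (snd (pick (cmp (\<sigma> n) g)))"
      unfolding pick_def by (rule someI[of _ "(n, g)"]) (simp add: g)
    then show ?thesis
      using well_defined[OF g] by metis
  qed
  then show thesis
    using that[of "\<lambda>f. F (fst (pick f)) (snd (pick f))"] by blast
qed

text \<open>Made extensional so that the colourings of a stage form a finite set.\<close>

definition pullback_coloring :: "'o \<Rightarrow> nat \<Rightarrow> nat \<Rightarrow> ('m \<Rightarrow> nat) \<Rightarrow> 'm \<Rightarrow> nat" where
  "pullback_coloring A n m c = (\<lambda>g\<in>hom A (X n). c (cmp (x n m) g))"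

definition bad_colorings :: "'o \<Rightarrow> 'o \<Rightarrow> nat \<Rightarrow> nat \<Rightarrow> nat \<Rightarrow> ('m \<Rightarrow> nat) set" where
  "bad_colorings A B k t n =
     {c \<in> hom A (X n) \<rightarrow>\<^sub>E {..<k}. \<forall>w\<in>hom B (X n). t < card (c ` cmp w ` hom A B)}"

lemma pullback_coloring_trans:
  assumes "n \<le> m" and "m \<le> l"
  shows "pullback_coloring A n m (pullback_coloring A m l c) = pullback_coloring A n l c"
proof
  fix g
  show "pullback_coloring A n m (pullback_coloring A m l c) g = pullback_coloring A n l c g"
  proof (cases "g \<in> hom A (X n)")
    case True
    then have "cmp (x n m) g \<in> hom A (X m)"
      using comp_in_hom x_in_hom assms by blast
    moreover have "cmp (x m l) (cmp (x n m) g) = cmp (x n l) g"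
      using comp_assoc[OF True x_in_hom x_in_hom] assms x_trans by simp
    ultimately show ?thesis
      using True unfolding pullback_coloring_def by simp
  qed (simp add: pullback_coloring_def)
qed

lemma pullback_coloring_refl:
  assumes "c \<in> hom A (X n) \<rightarrow>\<^sub>E K"
  shows "pullback_coloring A n n c = c"
proof
  fix g
  show "pullback_coloring A n n c g = c g"
  proof (cases "g \<in> hom A (X n)")
    case True
    then show ?thesis
      using ide_comp[OF True] unfolding pullback_coloring_def x_refl by simp
  next
    case False
    then show ?thesis
      using PiE_arb[OF assms False] unfolding pullback_coloring_def by simp
  qed
qed

lemma pullback_bad_coloring:
  assumes "n \<le> m" and c: "c \<in> bad_colorings A B k t m"
  shows "pullback_coloring A n m c \<in> bad_colorings A B k t n"
proof -
  have "c (cmp (x n m) g) \<in> {..<k}" if "g \<in> hom A (X n)" for g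
    using c comp_in_hom[OF that x_in_hom[OF \<open>n \<le> m\<close>]] unfolding bad_colorings_def by blast
  then have "pullback_coloring A n m c \<in> hom A (X n) \<rightarrow>\<^sub>E {..<k}"
    unfolding pullback_coloring_def by (simp add: restrict_PiE_iff)
  moreover have "t < card (pullback_coloring A n m c ` cmp w ` hom A B)" if w: "w \<in> hom B (X n)" for w
  proof -
    have w': "cmp (x n m) w \<in> hom B (X m)"
      using comp_in_hom[OF w x_in_hom] \<open>n \<le> m\<close> .
    have "pullback_coloring A n m c ` cmp w ` hom A B = c ` cmp (x n m) ` cmp w ` hom A B"
      unfolding pullback_coloring_def image_image using comp_in_hom[OF _ w] by (intro image_cong) auto
    also have "\<dots> = c ` cmp (cmp (x n m) w) ` hom A B"
      using image_comp_comp[OF w x_in_hom] \<open>n \<le> m\<close> by simp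
    finally show ?thesis
      using c w' unfolding bad_colorings_def by simp
  qed
  ultimately show ?thesis
    unfolding bad_colorings_def by blast
qed

lemma finite_bad_colorings:
  assumes "A \<in> ObD"
  shows "finite (bad_colorings A B k t n)"
proof -
  have "finite (hom A (X n) \<rightarrow>\<^sub>E {..<k})"
    using fin assms X_in_ObD by (intro finite_PiE) auto
  then show ?thesis
    unfolding bad_colorings_def by (rule rev_finite_subset) blast
qed

lemma bad_colorings_nonempty:
  assumes "col ` hom A (X n) \<subseteq> {..<k}"
    and "\<forall>w\<in>hom B (X n). t < card (col ` cmp w ` hom A B)"
  shows "bad_colorings A B k t n \<noteq> {}"
proof -
  have "restrict col (hom A (X n)) ` cmp w ` hom A B = col ` cmp w ` hom A B"
    if "w \<in> hom B (X n)" for w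
    unfolding image_image using comp_in_hom[OF _ that] by (intro image_cong) auto
  then have "restrict col (hom A (X n)) \<in> bad_colorings A B k t n"
    using assms unfolding bad_colorings_def by (auto simp: restrict_PiE_iff)
  then show ?thesis
    by blast
qed

lemma coherent_bad_colorings:
  assumes A: "A \<in> ObD" and bad_nonempty: "\<And>n. bad_colorings A B k t n \<noteq> {}"
  obtains F where "\<And>n. F n \<in> bad_colorings A B k t n"
    and "\<And>n m g. n \<le> m \<Longrightarrow> g \<in> hom A (X n) \<Longrightarrow> F m (cmp (x n m) g) = F n g"
proof -
  have bad_refl: "pullback_coloring A n n c = c" if "c \<in> bad_colorings A B k t n" for n c
    using pullback_coloring_refl that unfolding bad_colorings_def by blast
  have bad_trans: "pullback_coloring A n m (pullback_coloring A m l c) = pullback_coloring A n l c"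
    if "n \<le> m" and "m \<le> l" and "c \<in> bad_colorings A B k t l" for n m l c
    using pullback_coloring_trans that by blast
  obtain F where F_bad: "\<And>n. F n \<in> bad_colorings A B k t n"
    and F_coherent: "\<And>n m. n \<le> m \<Longrightarrow> pullback_coloring A n m (F m) = F n"
    using inverse_limit_finite_nonempty[of "bad_colorings A B k t" "pullback_coloring A",
        OF finite_bad_colorings[OF A] bad_nonempty pullback_bad_coloring bad_trans bad_refl]
    by blast
  have "F m (cmp (x n m) g) = F n g" if "n \<le> m" and "g \<in> hom A (X n)" for n m g
    using F_coherent[OF that(1)] that(2) unfolding pullback_coloring_def by (metis restrict_apply')
  with F_bad that show thesis
    by blast
qed

lemma ramsey_at_some_stage:
  assumes A: "A \<in> ObD" and B: "B \<in> ObD" and arrow: "borel_arrow hom cmp T S B A k t"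
  shows "\<exists>n. \<forall>col. col ` hom A (X n) \<subseteq> {..<k} \<longrightarrow>
           (\<exists>w\<in>hom B (X n). card (col ` cmp w ` hom A B) \<le> t)"
proof (rule ccontr)
  assume "\<not> ?thesis"
  then have "\<exists>col. col ` hom A (X n) \<subseteq> {..<k} \<and>
      (\<forall>w\<in>hom B (X n). t < card (col ` cmp w ` hom A B))" for n
    by (simp add: not_le)
  then obtain F where F_bad: "\<And>n. F n \<in> bad_colorings A B k t n"
    and coherent: "\<And>n m g. n \<le> m \<Longrightarrow> g \<in> hom A (X n) \<Longrightarrow> F m (cmp (x n m) g) = F n g"
    using coherent_bad_colorings[OF A] bad_colorings_nonempty by metis
  obtain col where col: "\<And>n g. g \<in> hom A (X n) \<Longrightarrow> col (cmp (\<sigma> n) g) = F n g"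
    using glue_coherent_colorings[OF coherent] by blast
  have "col f \<in> {..<k}" if f: "f \<in> hom A S" for f
  proof -
    obtain n g where g: "g \<in> hom A (X n)" and f_eq: "f = cmp (\<sigma> n) g"
      using factors_through_\<sigma>[OF A f] by blast
    have "F n \<in> hom A (X n) \<rightarrow>\<^sub>E {..<k}"
      using F_bad unfolding bad_colorings_def by blast
    then have "F n g \<in> {..<k}"
      using g by (rule PiE_mem)
    then show ?thesis
      using col[OF g] f_eq by simp
  qed
  then have "borel_coloring (T A S) k col"
    using borel_coloring_iff[OF A] by blast
  then obtain w where w: "w \<in> hom B S" and card_w: "card (col ` cmp w ` hom A B) \<le> t"
    using arrow unfolding borel_arrow_def by blast
  obtain n v where v: "v \<in> hom B (X n)" and w_eq: "w = cmp (\<sigma> n) v"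
    using factors_through_\<sigma>[OF B w] by blast
  have "col ` cmp w ` hom A B = col ` cmp (\<sigma> n) ` cmp v ` hom A B"
    by (simp only: w_eq image_comp_comp[OF v \<sigma>_in_hom])
  also have "\<dots> = F n ` cmp v ` hom A B"
    unfolding image_image using col comp_in_hom[OF _ v] by (intro image_cong) auto
  finally have "card (F n ` cmp v ` hom A B) \<le> t"
    using card_w by simp
  moreover have "t < card (F n ` cmp v ` hom A B)"
    using F_bad[of n] v unfolding bad_colorings_def by blast
  ultimately show False
    by simp
qed

lemma borel_arrow_if_small_ramsey_prop:
  assumes A: "A \<in> ObD" and B: "B \<in> ObD" and ramsey: "small_ramsey_prop ObD hom cmp A t"
  shows "borel_arrow hom cmp T S B A k t"
  unfolding borel_arrow_def
proof (intro allI impI)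
  fix col
  assume "borel_coloring (T A S) k col"
  then have col_range: "col ` hom A S \<subseteq> {..<k}"
    using borel_coloring_iff[OF A] by blast
  obtain C where C: "C \<in> ObD" and C_ramsey: "\<forall>col'::'m \<Rightarrow> nat. col' ` hom A C \<subseteq> {..<k} \<longrightarrow>
      (\<exists>w\<in>hom B C. card (col' ` cmp w ` hom A B) \<le> t)"
    using ramsey B unfolding small_ramsey_prop_def by blast
  obtain u where u: "u \<in> hom C S"
    using hom_to_S_nonempty[OF C] by blast
  have "(\<lambda>g. col (cmp u g)) ` hom A C \<subseteq> {..<k}"
    using col_range comp_in_hom[OF _ u] by blast
  then obtain w where w: "w \<in> hom B C" and card_w: "card ((\<lambda>g. col (cmp u g)) ` cmp w ` hom A B) \<le> t"
    using C_ramsey by blast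
  have "(\<lambda>g. col (cmp u g)) ` cmp w ` hom A B = col ` cmp u ` cmp w ` hom A B"
    by (simp add: image_image)
  also have "\<dots> = col ` cmp (cmp u w) ` hom A B"
    by (simp only: image_comp_comp[OF w u])
  finally have "(\<lambda>g. col (cmp u g)) ` cmp w ` hom A B = col ` cmp (cmp u w) ` hom A B" .
  then show "\<exists>w\<in>hom B S. card (col ` cmp w ` hom A B) \<le> t"
    using card_w comp_in_hom[OF w u] by auto
qed

lemma small_ramsey_prop_if_borel_arrows:
  assumes A: "A \<in> ObD"
    and arrows: "\<forall>k. \<forall>B\<in>ObD. hom A B \<noteq> {} \<longrightarrow> borel_arrow hom cmp T S B A k t"
  shows "small_ramsey_prop ObD hom cmp A t"
  unfolding small_ramsey_prop_def
proof (intro allI ballI)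
  fix k B
  assume B: "B \<in> ObD"
  show "\<exists>C\<in>ObD. \<forall>col::'m \<Rightarrow> nat. col ` hom A C \<subseteq> {..<k} \<longrightarrow>
          (\<exists>w\<in>hom B C. card (col ` cmp w ` hom A B) \<le> t)"
  proof (cases "hom A B = {}")
    case True
    have "ide B \<in> hom B B"
      using B sub ide_in_hom by blast
    then show ?thesis
      using B True by (intro bexI[of _ B]) auto
  next
    case False
    then obtain n where "\<forall>col. col ` hom A (X n) \<subseteq> {..<k} \<longrightarrow>
        (\<exists>w\<in>hom B (X n). card (col ` cmp w ` hom A B) \<le> t)"
      using ramsey_at_some_stage[OF A B] arrows B by blast
    then show ?thesis
      using X_in_ObD by blast
  qed
qed

lemma borel_arrow_self_positive:
  assumes A: "A \<in> ObD" and arrow: "borel_arrow hom cmp T S A A 1 t"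
  shows "0 < t"
proof -
  have "borel_coloring (T A S) 1 (\<lambda>_. 0)"
    unfolding borel_coloring_iff[OF A] by blast
  then obtain w where "card ((\<lambda>_. 0::nat) ` cmp w ` hom A A) \<le> t"
    using arrow unfolding borel_arrow_def by blast
  moreover have "hom A A \<noteq> {}"
    using ide_in_hom A sub by blast
  then have "(\<lambda>_. 0::nat) ` cmp w ` hom A A = {0}"
    by blast
  ultimately show ?thesis
    by simp
qed

lemma small_ramsey_degree_le_iff_borel_arrows:
  assumes A: "A \<in> ObD"
  shows "small_ramsey_degree ObD hom cmp A \<le> enat t \<longleftrightarrow>
           (\<forall>k. \<forall>B\<in>ObD. hom A B \<noteq> {} \<longrightarrow> borel_arrow hom cmp T S B A k t)"
proof
  assume "small_ramsey_degree ObD hom cmp A \<le> enat t"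
  then have "small_ramsey_prop ObD hom cmp A t"
    unfolding small_ramsey_degree_le_enat_iff by blast
  then show "\<forall>k. \<forall>B\<in>ObD. hom A B \<noteq> {} \<longrightarrow> borel_arrow hom cmp T S B A k t"
    using borel_arrow_if_small_ramsey_prop[OF A] by blast
next
  assume arrows: "\<forall>k. \<forall>B\<in>ObD. hom A B \<noteq> {} \<longrightarrow> borel_arrow hom cmp T S B A k t"
  have "hom A A \<noteq> {}"
    using ide_in_hom A sub by blast
  then have "0 < t"
    using borel_arrow_self_positive[OF A] arrows A by blast
  with small_ramsey_prop_if_borel_arrows[OF A arrows]
  show "small_ramsey_degree ObD hom cmp A \<le> enat t"
    unfolding small_ramsey_degree_le_enat_iff by blast
qed

lemma borel_arrow_from_S:
  assumes A: "A \<in> ObD" and B: "B \<in> ObD" and arrow: "borel_arrow hom cmp T S S A k t"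
  shows "borel_arrow hom cmp T S B A k t"
  unfolding borel_arrow_def
proof (intro allI impI)
  fix col
  assume col: "borel_coloring (T A S) k col"
  obtain b where b: "b \<in> hom B S"
    using hom_to_S_nonempty[OF B] by blast
  obtain w where w: "w \<in> hom S S" and card_w: "card (col ` cmp w ` hom A S) \<le> t"
    using arrow col unfolding borel_arrow_def by blast
  have "cmp b ` hom A B \<subseteq> hom A S"
    using comp_in_hom[OF _ b] by blast
  then have sub_w: "col ` cmp (cmp w b) ` hom A B \<subseteq> col ` cmp w ` hom A S"
    unfolding image_comp_comp[OF b w, symmetric] by (intro image_mono)
  have "cmp w ` hom A S \<subseteq> hom A S"
    using comp_in_hom[OF _ w] by blast
  then have "col ` cmp w ` hom A S \<subseteq> {..<k}"
    using col borel_coloring_iff[OF A] by blast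
  then have "finite (col ` cmp w ` hom A S)"
    by (rule finite_subset) simp
  then have "card (col ` cmp (cmp w b) ` hom A B) \<le> t"
    using card_mono[OF _ sub_w] card_w by linarith
  then show "\<exists>w\<in>hom B S. card (col ` cmp w ` hom A B) \<le> t"
    using comp_in_hom[OF b w] by blast
qed

lemma borel_arrow_few_colors:
  assumes A: "A \<in> ObD" and B: "B \<in> ObD" and "k \<le> t"
  shows "borel_arrow hom cmp T S B A k t"
  unfolding borel_arrow_def
proof (intro allI impI)
  fix col
  assume col: "borel_coloring (T A S) k col"
  obtain b where b: "b \<in> hom B S"
    using hom_to_S_nonempty[OF B] by blast
  have "cmp b ` hom A B \<subseteq> hom A S"
    using comp_in_hom[OF _ b] by blast
  then have "col ` cmp b ` hom A B \<subseteq> {..<k}"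
    using col borel_coloring_iff[OF A] by blast
  then have "card (col ` cmp b ` hom A B) \<le> card {..<k}"
    by (rule card_mono[OF finite_lessThan])
  then have "card (col ` cmp b ` hom A B) \<le> t"
    using \<open>k \<le> t\<close> by simp
  with b show "\<exists>w\<in>hom B S. card (col ` cmp w ` hom A B) \<le> t"
    by blast
qed

lemma small_ramsey_degree_le_big_ramsey_degree:
  assumes A: "A \<in> ObD"
  shows "small_ramsey_degree ObD hom cmp A \<le> big_ramsey_degree hom cmp T A S"
proof (cases "big_ramsey_degree hom cmp T A S")
  case (enat N)
  have "borel_arrow hom cmp T S B A k N" if B: "B \<in> ObD" for k B
  proof (cases "2 \<le> k")
    case True
    then show ?thesis
      using borel_arrow_from_S[OF A B] big_ramsey_degree_enatD(2)[OF enat] by blast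
  next
    case False
    then show ?thesis
      using borel_arrow_few_colors[OF A B] big_ramsey_degree_enatD(1)[OF enat] by simp
  qed
  then have "small_ramsey_degree ObD hom cmp A \<le> enat N"
    using small_ramsey_degree_le_iff_borel_arrows[OF A] by blast
  with enat show ?thesis
    by simp
next
  case infinity
  then show ?thesis
    by simp
qed

end

theorem corollary5p2:
  fixes Ob ObD :: "'o set" and hom :: "'o \<Rightarrow> 'o \<Rightarrow> 'm set" and cmp :: "'m \<Rightarrow> 'm \<Rightarrow> 'm"
    and ide :: "'o \<Rightarrow> 'm" and T :: "'o \<Rightarrow> 'o \<Rightarrow> 'm topology"
    and X :: "nat \<Rightarrow> 'o" and x :: "nat \<Rightarrow> nat \<Rightarrow> 'm" and S :: 'o and \<sigma> :: "nat \<Rightarrow> 'm"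
  assumes cat: "category Ob hom cmp ide"
    and mono: "all_mono Ob hom cmp"
    and enr: "top_enriched Ob hom cmp T"
    and haus: "\<forall>A\<in>Ob. \<forall>B\<in>Ob. Hausdorff_space (T A B)"
    and sub: "ObD \<subseteq> Ob"
    and fin: "\<forall>A\<in>ObD. \<forall>B\<in>ObD. finite (hom A B)"
    and seq: "is_sequence ObD hom cmp ide X x"
    and colim: "is_colimit Ob hom cmp X x S \<sigma>"
    and small: "omega_small ObD hom cmp X S \<sigma>"
    and univ: "universal_for ObD hom S"
  shows "(\<forall>A\<in>ObD. \<forall>t::nat.
            small_ramsey_degree ObD hom cmp A \<le> enat t \<longleftrightarrow>
            (\<forall>k::nat. \<forall>B\<in>ObD. hom A B \<noteq> {} \<longrightarrow> borel_arrow hom cmp T S B A k t))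
       \<and> (\<forall>A\<in>ObD. small_ramsey_degree ObD hom cmp A \<le> big_ramsey_degree hom cmp T A S)"
proof -
  interpret omega_colimit Ob hom cmp ide ObD T X x S \<sigma>
    using assms by (unfold_locales) auto
  show ?thesis
    using small_ramsey_degree_le_iff_borel_arrows small_ramsey_degree_le_big_ramsey_degree
    by blast
qed

end
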